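(* Let $t$ be a positive integer and let $G$ be a graph on $4t-1$ vertices with $\alpha(G)=2$ and $\mathrm{cm}(G)\le t-1$. Then for any triangle $v_1v_2v_3v_1$ in $G$, we have $\left|N(v_1)\cap N(v_2)\cap N(v_3)\right|\ge t+2$.
   Context: All graphs are finite and simple. $\alpha(G)$ is the independence number; $N(v)$ is the set of neighbours of $v$. A matching $M$ in $G$ is connected if for every two edges of $M$ there is an edge of $G$ joining an endpoint of one to an endpoint of the other; $\mathrm{cm}(G)$ is the maximum size of a connected matching in $G$. *)

theory Defs
  imports Main
begin

definition simple_graph :: "'a set \<Rightarrow> ('a \<Rightarrow> 'a \<Rightarrow> bool) \<Rightarrow> bool" where
  "simple_graph V E \<longleftrightarrow> finite V \<and> (\<forall>u v. E u v \<longrightarrow> u \<in> V \<and> v \<in> V)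
     \<and> (\<forall>u v. E u v \<longrightarrow> E v u) \<and> (\<forall>v. \<not> E v v)"

definition independent_set :: "'a set \<Rightarrow> ('a \<Rightarrow> 'a \<Rightarrow> bool) \<Rightarrow> 'a set \<Rightarrow> bool" where
  "independent_set V E S \<longleftrightarrow> S \<subseteq> V \<and> (\<forall>u\<in>S. \<forall>v\<in>S. \<not> E u v)"

definition alpha :: "'a set \<Rightarrow> ('a \<Rightarrow> 'a \<Rightarrow> bool) \<Rightarrow> nat" where
  "alpha V E = Max (card ` {S. independent_set V E S})"

definition neighbours :: "('a \<Rightarrow> 'a \<Rightarrow> bool) \<Rightarrow> 'a \<Rightarrow> 'a set" where
  "neighbours E v = {u. E v u}"

definition graph_edges :: "('a \<Rightarrow> 'a \<Rightarrow> bool) \<Rightarrow> 'a set set" where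
  "graph_edges E = {{u, v} | u v. E u v}"

definition matching :: "('a \<Rightarrow> 'a \<Rightarrow> bool) \<Rightarrow> 'a set set \<Rightarrow> bool" where
  "matching E M \<longleftrightarrow> M \<subseteq> graph_edges E \<and> (\<forall>e\<in>M. \<forall>f\<in>M. e \<noteq> f \<longrightarrow> e \<inter> f = {})"

definition connected_matching :: "('a \<Rightarrow> 'a \<Rightarrow> bool) \<Rightarrow> 'a set set \<Rightarrow> bool" where
  "connected_matching E M \<longleftrightarrow> matching E M \<and>
     (\<forall>e\<in>M. \<forall>f\<in>M. e \<noteq> f \<longrightarrow> (\<exists>x\<in>e. \<exists>y\<in>f. E x y))"

definition cm :: "'a set \<Rightarrow> ('a \<Rightarrow> 'a \<Rightarrow> bool) \<Rightarrow> nat" where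
  "cm V E = Max (card ` {M. connected_matching E M})"

end

(*
  Because alpha(G) <= 2, the non-neighbours of any vertex v form a clique A(v).
  A clique K in which every k has its own neighbour f(k) outside K (f injective)
  carries the connected matching {k, f(k)} of size |K|; in particular a clique on
  2m vertices has a connected matching of size m.  With at least 4t - 1 vertices
  and cm(G) < t this bounds every clique by t - 1: each vertex of a t-clique K0 has
  fewer than 2t non-neighbours, hence at least t neighbours among the 3t - 1
  vertices outside K0, so K0 could be matched greedily into V - K0.  If |A(v)| were
  t - 1, matching A(v) into the (large) neighbourhoods and adding one edge at v,
  which is adjacent to all partners, would give a connected matching of size t.
  So |A(v)| <= t - 2 for every v, and any three vertices (not only those of a
  triangle) have at least (4t - 1) - 3 - 3(t - 2) = t + 2 common neighbours.
*)

theory Submission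
  imports Defs
begin

definition clique :: "('a \<Rightarrow> 'a \<Rightarrow> bool) \<Rightarrow> 'a set \<Rightarrow> bool" where
  "clique E K \<longleftrightarrow> (\<forall>x\<in>K. \<forall>y\<in>K. x \<noteq> y \<longrightarrow> E x y)"

definition non_neighbours :: "'a set \<Rightarrow> ('a \<Rightarrow> 'a \<Rightarrow> bool) \<Rightarrow> 'a \<Rightarrow> 'a set" where
  "non_neighbours V E v = {x \<in> V. x \<noteq> v \<and> \<not> E v x}"

lemma clique_subset: "clique E K \<Longrightarrow> L \<subseteq> K \<Longrightarrow> clique E L"
  unfolding clique_def by blast

lemma inj_on_representatives:
  assumes "finite K" and "\<And>k. k \<in> K \<Longrightarrow> finite (S k) \<and> card K \<le> card (S k)"
  shows "\<exists>f. inj_on f K \<and> (\<forall>k\<in>K. f k \<in> S k)"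
  using assms
proof (induction K rule: finite_induct)
  case empty
  then show ?case by simp
next
  case (insert a K)
  then obtain f where f: "inj_on f K" "\<forall>k\<in>K. f k \<in> S k"
    by force
  have "card (f ` K) < card (S a)"
    using insert card_image_le[of K f] by force
  then obtain b where b: "b \<in> S a" "b \<notin> f ` K"
    by (meson card_mono finite_imageI insert.hyps(1) leD subsetI)
  have "inj_on (f(a := b)) (insert a K)"
    using inj_on_fun_updI[OF f(1) b(2)] b(2) insert.hyps(2) by auto
  moreover have "\<forall>k\<in>insert a K. (f(a := b)) k \<in> S k"
    using f(2) b(1) by simp
  ultimately show ?case by blast
qed

locale graph =
  fixes V :: "'a set" and E :: "'a \<Rightarrow> 'a \<Rightarrow> bool"
  assumes simple_graph: "simple_graph V E"
begin

lemma finite_vertices: "finite V"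
  using simple_graph by (simp add: simple_graph_def)

lemma edge_sym: "E u v \<Longrightarrow> E v u"
  using simple_graph by (simp add: simple_graph_def)

lemma no_loop: "\<not> E v v"
  using simple_graph by (simp add: simple_graph_def)

lemma edge_vertices: "E u v \<Longrightarrow> u \<in> V \<and> v \<in> V"
  using simple_graph by (simp add: simple_graph_def)

lemma neighbours_subset: "neighbours E v \<subseteq> V"
  using edge_vertices by (auto simp: neighbours_def)

lemma finite_neighbours: "finite (neighbours E v)"
  using finite_subset[OF neighbours_subset finite_vertices] .

lemma card_le_cm:
  assumes "connected_matching E M"
  shows "card M \<le> cm V E"
proof -
  have "{M. connected_matching E M} \<subseteq> Pow (Pow V)"
    using edge_vertices
    by (auto simp: connected_matching_def matching_def graph_edges_def)
  then have "finite {M. connected_matching E M}"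
    using finite_vertices by (meson finite_Pow_iff finite_subset)
  then show ?thesis
    unfolding cm_def using assms by auto
qed

lemma finite_connected_matching:
  assumes "connected_matching E M"
  shows "finite M"
proof -
  have "M \<subseteq> Pow V"
    using assms edge_vertices
    by (auto simp: connected_matching_def matching_def graph_edges_def)
  then show ?thesis
    using finite_vertices by (meson finite_Pow_iff finite_subset)
qed

lemma card_le_alpha:
  assumes "independent_set V E S"
  shows "card S \<le> alpha V E"
proof -
  have "finite {S. independent_set V E S}"
    using finite_vertices by (simp add: independent_set_def)
  then show ?thesis
    unfolding alpha_def using assms by auto
qed

lemma clique_non_neighbours:
  assumes "alpha V E \<le> 2" and "v \<in> V"
  shows "clique E (non_neighbours V E v)"
  unfolding clique_def
proof (intro ballI impI)
  fix x y
  assume x: "x \<in> non_neighbours V E v" and y: "y \<in> non_neighbours V E v" and "x \<noteq> y"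
  show "E x y"
  proof (rule ccontr)
    assume "\<not> E x y"
    then have "independent_set V E {v, x, y}"
      using x y \<open>v \<in> V\<close> edge_sym no_loop
      by (auto simp: independent_set_def non_neighbours_def)
    moreover have "card {v, x, y} = 3"
      using x y \<open>x \<noteq> y\<close> by (auto simp: non_neighbours_def)
    ultimately show False
      using card_le_alpha assms(1) by fastforce
  qed
qed

lemma card_vertices_eq:
  assumes "v \<in> V"
  shows "card V = Suc (card (non_neighbours V E v) + card (neighbours E v))"
proof -
  have finite: "finite (non_neighbours V E v)" "finite (neighbours E v)"
    using finite_vertices finite_neighbours by (auto simp: non_neighbours_def)
  have "V = insert v (non_neighbours V E v \<union> neighbours E v)"
    using assms neighbours_subset by (auto simp: non_neighbours_def neighbours_def)
  also have "card \<dots> = Suc (card (non_neighbours V E v \<union> neighbours E v))"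
    using finite no_loop by (simp add: non_neighbours_def neighbours_def)
  also have "card (non_neighbours V E v \<union> neighbours E v)
      = card (non_neighbours V E v) + card (neighbours E v)"
    using finite by (rule card_Un_disjoint) (auto simp: non_neighbours_def neighbours_def)
  finally show ?thesis .
qed

lemma connected_matching_clique:
  assumes "clique E K" and "\<And>k. k \<in> K \<Longrightarrow> E k (f k) \<and> f k \<notin> K" and "inj_on f K"
  shows "connected_matching E ((\<lambda>k. {k, f k}) ` K)"
proof -
  have "(\<lambda>k. {k, f k}) ` K \<subseteq> graph_edges E"
    using assms(2) by (auto simp: graph_edges_def)
  moreover have "e \<inter> e' = {} \<and> (\<exists>x\<in>e. \<exists>y\<in>e'. E x y)"
    if e: "e \<in> (\<lambda>k. {k, f k}) ` K" and e': "e' \<in> (\<lambda>k. {k, f k}) ` K" and "e \<noteq> e'" for e e'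
  proof -
    obtain k k' where "k \<in> K" "k' \<in> K" "e = {k, f k}" "e' = {k', f k'}"
      using e e' by blast
    moreover have "k \<noteq> k'"
      using calculation \<open>e \<noteq> e'\<close> by blast
    ultimately show ?thesis
      using assms by (auto simp: clique_def inj_on_def)
  qed
  ultimately show ?thesis
    unfolding connected_matching_def matching_def by blast
qed

lemma card_clique_edges:
  assumes "\<And>k. k \<in> K \<Longrightarrow> f k \<notin> K"
  shows "card ((\<lambda>k. {k, f k}) ` K) = card K"
proof (rule card_image)
  show "inj_on (\<lambda>k. {k, f k}) K"
    using assms by (auto simp: inj_on_def doubleton_eq_iff)
qed

lemma card_clique_le_cm:
  assumes "clique E K" and "\<And>k. k \<in> K \<Longrightarrow> E k (f k) \<and> f k \<notin> K" and "inj_on f K"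
  shows "card K \<le> cm V E"
  using card_le_cm[OF connected_matching_clique[OF assms]] card_clique_edges[of K f] assms(2)
  by simp

lemma connected_matching_insert:
  assumes "connected_matching E M" and "E p q"
    and "\<And>e. e \<in> M \<Longrightarrow> p \<notin> e \<and> q \<notin> e"
    and "\<And>e. e \<in> M \<Longrightarrow> \<exists>x\<in>{p, q}. \<exists>y\<in>e. E x y"
  shows "connected_matching E (insert {p, q} M)"
proof -
  have "{p, q} \<in> graph_edges E"
    using assms(2) by (auto simp: graph_edges_def)
  moreover have "{p, q} \<inter> e = {}" if "e \<in> M" for e
    using assms(3) that by auto
  moreover have "\<exists>x\<in>e. \<exists>y\<in>{p, q}. E x y" if "e \<in> M" for e
    using assms(4)[OF that] edge_sym by blast
  ultimately show ?thesis
    using assms(1,4) unfolding connected_matching_def matching_def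
    by (simp add: Int_commute)
qed

lemma card_clique_apex_le_cm:
  assumes "clique E K" and "\<And>k. k \<in> K \<Longrightarrow> E k (f k) \<and> f k \<notin> K" and "inj_on f K"
    and "\<And>k. k \<in> K \<Longrightarrow> E v (f k)"
    and "E v y" and "v \<notin> K" and "y \<notin> K" and "y \<notin> f ` K"
  shows "Suc (card K) \<le> cm V E"
proof -
  let ?M = "(\<lambda>k. {k, f k}) ` K"
  have M: "connected_matching E ?M"
    using connected_matching_clique[OF assms(1-3)] .
  have fresh: "v \<notin> e \<and> y \<notin> e" if "e \<in> ?M" for e
    using that assms(4,6-8) no_loop by fastforce
  have "connected_matching E (insert {v, y} ?M)"
  proof (rule connected_matching_insert[OF M \<open>E v y\<close> fresh])
    show "\<exists>x\<in>{v, y}. \<exists>z\<in>e. E x z" if "e \<in> ?M" for e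
      using that assms(4) by blast
  qed
  moreover have "{v, y} \<notin> ?M"
    using fresh by blast
  then have "card (insert {v, y} ?M) = Suc (card K)"
    using card_clique_edges[of K f] assms(2) finite_connected_matching[OF M] by simp
  ultimately show ?thesis
    using card_le_cm by metis
qed

lemma half_card_clique_le_cm:
  assumes "clique E B" and "B \<subseteq> V"
  shows "card B div 2 \<le> cm V E"
proof -
  have "finite B"
    using assms(2) finite_vertices finite_subset by blast
  obtain K where K: "K \<subseteq> B" "card K = card B div 2" "finite K"
    by (meson div_le_dividend obtain_subset_with_card_n)
  have "card K \<le> card (B - K)"
    using K \<open>finite B\<close> by (simp add: card_Diff_subset)
  then obtain L where L: "L \<subseteq> B - K" "card L = card K" "finite L"
    by (meson obtain_subset_with_card_n)
  then obtain g where g: "bij_betw g K L"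
    using finite_same_card_bij K(3) by metis
  have "E k (g k) \<and> g k \<notin> K" if "k \<in> K" for k
  proof -
    have "g k \<in> L"
      using g that by (meson bij_betwE)
    then have "g k \<in> B" "g k \<notin> K"
      using L(1) by auto
    moreover have "k \<in> B"
      using K(1) that by blast
    ultimately show ?thesis
      using assms(1) that unfolding clique_def by metis
  qed
  then have "card K \<le> cm V E"
    using card_clique_le_cm[OF clique_subset[OF assms(1) K(1)]] g
    by (meson bij_betw_imp_inj_on)
  then show ?thesis
    using K(2) by simp
qed

end

locale small_cm_graph = graph +
  fixes t :: nat
  assumes t_pos: "1 \<le> t"
    and card_vertices: "4 * t - 1 \<le> card V"
    and alpha_le_2: "alpha V E \<le> 2"
    and cm_less: "cm V E < t"
begin

lemma card_clique_less_double:
  assumes "K \<subseteq> V" and "clique E K"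
  shows "card K < 2 * t"
  using half_card_clique_le_cm[OF assms(2,1)] cm_less by linarith

lemma card_clique_less:
  assumes "K \<subseteq> V" and "clique E K"
  shows "card K < t"
proof (rule ccontr)
  assume "\<not> card K < t"
  then obtain K0 where K0: "K0 \<subseteq> K" "card K0 = t" "finite K0"
    by (meson not_less obtain_subset_with_card_n)
  define R where "R = V - K0"
  have "finite R"
    using finite_vertices by (simp add: R_def)
  have "card R = card V - t"
    using K0 assms(1) by (simp add: R_def card_Diff_subset)
  have "t \<le> card (R \<inter> neighbours E k)" if "k \<in> K0" for k
  proof -
    have "clique E (non_neighbours V E k)"
      using clique_non_neighbours[OF alpha_le_2] that K0(1) assms(1) by blast
    moreover have "R - neighbours E k \<subseteq> non_neighbours V E k"
      using that by (auto simp: R_def non_neighbours_def neighbours_def)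
    ultimately have "clique E (R - neighbours E k)"
      by (rule clique_subset)
    moreover have "R - neighbours E k \<subseteq> V"
      by (auto simp: R_def)
    ultimately have "card (R - neighbours E k) < 2 * t"
      using card_clique_less_double by blast
    moreover have "card R = card (R \<inter> neighbours E k) + card (R - neighbours E k)"
      using card_Int_Diff[OF \<open>finite R\<close>] .
    ultimately show ?thesis
      using \<open>card R = card V - t\<close> card_vertices by linarith
  qed
  then obtain f where f: "inj_on f K0" "\<forall>k\<in>K0. f k \<in> R \<inter> neighbours E k"
    using inj_on_representatives[OF K0(3), of "\<lambda>k. R \<inter> neighbours E k"]
      K0(2) \<open>finite R\<close> by auto
  have "clique E K0"
    using assms(2) K0(1) by (rule clique_subset)
  then have "t \<le> cm V E"
    using card_clique_le_cm[OF _ _ f(1)] f(2) K0(2)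
    by (auto simp: R_def neighbours_def)
  with cm_less show False
    by simp
qed

lemma card_non_neighbours_less:
  assumes "v \<in> V"
  shows "card (non_neighbours V E v) < t"
  using card_clique_less clique_non_neighbours[OF alpha_le_2 assms]
  by (auto simp: non_neighbours_def)

lemma card_neighbours_ge:
  assumes "v \<in> V"
  shows "3 * t - 1 \<le> card (neighbours E v)"
  using card_vertices_eq[OF assms] card_non_neighbours_less[OF assms] card_vertices
  by linarith

lemma card_non_neighbours_le:
  assumes "v \<in> V"
  shows "card (non_neighbours V E v) + 2 \<le> t"
proof (rule ccontr)
  define A where "A = non_neighbours V E v"
  assume "\<not> card (non_neighbours V E v) + 2 \<le> t"
  then have card_A: "card A = t - 1"
    using card_non_neighbours_less[OF assms] by (simp add: A_def)
  have "A \<subseteq> V" and "finite A"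
    using finite_vertices by (auto simp: A_def non_neighbours_def)
  have "card A \<le> card (neighbours E a - A)" if "a \<in> A" for a
  proof -
    have "card (neighbours E a) - card A \<le> card (neighbours E a - A)"
      using \<open>finite A\<close> by (rule diff_card_le_card_Diff)
    then show ?thesis
      using card_neighbours_ge \<open>A \<subseteq> V\<close> that card_A by fastforce
  qed
  then obtain f where f: "inj_on f A" "\<forall>a\<in>A. f a \<in> neighbours E a - A"
    using inj_on_representatives[OF \<open>finite A\<close>, of "\<lambda>a. neighbours E a - A"]
      finite_neighbours by auto
  have v_f: "E v (f a)" if "a \<in> A" for a
    using f(2) that edge_sym edge_vertices
    by (auto simp: A_def non_neighbours_def neighbours_def)
  have "card (f ` A) < card (neighbours E v)"
    using card_image_le[OF \<open>finite A\<close>, of f] card_A card_neighbours_ge[OF assms] t_pos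
    by linarith
  then obtain y where y: "y \<in> neighbours E v" "y \<notin> f ` A"
    by (meson card_mono finite_imageI[OF \<open>finite A\<close>] leD subsetI)
  have "clique E A"
    unfolding A_def using clique_non_neighbours[OF alpha_le_2 assms] .
  moreover have "v \<notin> A" "y \<notin> A"
    using y by (auto simp: A_def non_neighbours_def neighbours_def)
  ultimately have "Suc (card A) \<le> cm V E"
    using card_clique_apex_le_cm[of A f v y] f y v_f by (auto simp: neighbours_def)
  then show False
    using card_A t_pos cm_less by linarith
qed

lemma card_common_neighbours_ge:
  assumes "v1 \<in> V" and "v2 \<in> V" and "v3 \<in> V"
  shows "t + 2 \<le> card (neighbours E v1 \<inter> neighbours E v2 \<inter> neighbours E v3)"
proof -
  let ?C = "neighbours E v1 \<inter> neighbours E v2 \<inter> neighbours E v3"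
  let ?A = "\<lambda>v. non_neighbours V E v"
  have "V - ?C \<subseteq> {v1, v2, v3} \<union> ?A v1 \<union> ?A v2 \<union> ?A v3"
    by (auto simp: neighbours_def non_neighbours_def)
  then have "card (V - ?C) \<le> card ({v1, v2, v3} \<union> ?A v1 \<union> ?A v2 \<union> ?A v3)"
    using finite_vertices by (intro card_mono) (auto simp: non_neighbours_def)
  also have "\<dots> \<le> card {v1, v2, v3} + card (?A v1) + card (?A v2) + card (?A v3)"
    by (meson add_mono card_Un_le le_refl order_trans)
  also have "\<dots> \<le> 3 * t - 3"
    using assms[THEN card_non_neighbours_le] card_insert_le_m1[of 3 "{v2, v3}" v1]
      card_insert_le_m1[of 2 "{v3}" v2]
    by simp
  finally have "card (V - ?C) \<le> 3 * t - 3" .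
  moreover have "card (V - ?C) = card V - card ?C"
    using finite_vertices neighbours_subset by (meson card_Diff_subset finite_subset le_infI1)
  ultimately show ?thesis
    using card_vertices t_pos by linarith
qed

end

theorem lemma2p2:
  fixes V :: "'a set" and E :: "'a \<Rightarrow> 'a \<Rightarrow> bool" and t :: nat
    and v1 v2 v3 :: 'a
  assumes "simple_graph V E"
    and "t \<ge> 1"
    and "card V = 4 * t - 1"
    and "alpha V E = 2"
    and "cm V E \<le> t - 1"
    and "E v1 v2" and "E v2 v3" and "E v3 v1"
  shows "card (neighbours E v1 \<inter> neighbours E v2 \<inter> neighbours E v3) \<ge> t + 2"
proof -
  interpret small_cm_graph V E t
    using assms(1-5) by unfold_locales auto
  have "v1 \<in> V" "v2 \<in> V" "v3 \<in> V"
    using edge_vertices assms(6,7) by auto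
  then show ?thesis
    by (rule card_common_neighbours_ge)
qed

end
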